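(* If a \textsc{2-Visits} instance has a feasible schedule, then it has a feasible schedule in which all secondary visits are placed in gaps (equivalently, no primary visit is placed in a gap).
   Context: \textsc{2-Visits} (primary/secondary formulation): given non-decreasing positive integers $d_1\le\dots\le d_n$, a feasible schedule is a schedule of length $2n$ (each position $1,\dots,2n$ holds one visit) containing one primary and one secondary visit of each node $i\in[n]$, such that the primary visit of $i$ is at position at most $d_i$, and the secondary visit of $i$ is either before its primary visit or at most $d_i$ positions after its primary visit. The discretized sequence $A=\langle a_1,\dots,a_n\rangle$ is defined by $a_n=d_n$ and $a_i=\min\{a_{i+1}-1,d_i\}$ for $i<n$; a position $p\in[2n]$ is a gap if $p\notin A$. Standing assumptions: all entries of $A$ are positive and all $d_i\le 2n$ (so there are exactly $n$ gaps in $[2n]$). *)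

theory Defs
  imports Main
begin

text \<open>An instance is given by n and deadlines d 1, ..., d n (function d :: nat => nat,
  only values on {1..n} matter).\<close>

definition valid_instance :: "nat \<Rightarrow> (nat \<Rightarrow> nat) \<Rightarrow> bool" where
  "valid_instance n d \<longleftrightarrow>
     (\<forall>i\<in>{1..n}. 0 < d i) \<and> (\<forall>i\<in>{1..n}. \<forall>j\<in>{1..n}. i \<le> j \<longrightarrow> d i \<le> d j)"

definition is_schedule :: "nat \<Rightarrow> (nat \<Rightarrow> nat) \<Rightarrow> (nat \<Rightarrow> nat) \<Rightarrow> bool" where
  "is_schedule n prim sec \<longleftrightarrow>
     (\<forall>i\<in>{1..n}. prim i \<in> {1..2*n} \<and> sec i \<in> {1..2*n}) \<and>
     inj_on prim {1..n} \<and> inj_on sec {1..n} \<and>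
     (\<forall>i\<in>{1..n}. \<forall>j\<in>{1..n}. prim i \<noteq> sec j)"

definition feasible_schedule ::
  "nat \<Rightarrow> (nat \<Rightarrow> nat) \<Rightarrow> (nat \<Rightarrow> nat) \<Rightarrow> (nat \<Rightarrow> nat) \<Rightarrow> bool" where
  "feasible_schedule n d prim sec \<longleftrightarrow>
     is_schedule n prim sec \<and>
     (\<forall>i\<in>{1..n}. prim i \<le> d i \<and>
        (sec i < prim i \<or> (prim i < sec i \<and> sec i \<le> prim i + d i)))"

text \<open>Discretized sequence: a n = d n, a i = min (a (i+1) - 1) (d i) for i < n.
  (Natural subtraction; under the standing assumption that all a i are positive the
  truncation never occurs.)\<close>
function disc :: "nat \<Rightarrow> (nat \<Rightarrow> nat) \<Rightarrow> nat \<Rightarrow> nat" where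
  "disc n d i = (if n \<le> i then d n else min (disc n d (Suc i) - 1) (d i))"
  by auto
termination by (relation "measure (\<lambda>(n, d, i). n - i)") auto

declare disc.simps[simp del]

definition gap :: "nat \<Rightarrow> (nat \<Rightarrow> nat) \<Rightarrow> nat \<Rightarrow> bool" where
  "gap n d p \<longleftrightarrow> p \<in> {1..2*n} \<and> p \<notin> disc n d ` {1..n}"

end

theory Submission
  imports Defs "HOL-Combinatorics.Transposition"
begin

text \<open>Take a feasible schedule maximising the sum of the primary positions. No primary visit
  of v can then be moved to a later position x \<le> d v not holding a primary: x holds some
  secondary visit, and exchanging the two visits keeps the schedule feasible. So the positions
  between a primary visit and its deadline are all primary. Now a j = disc n d j equals
  d l - (l - j) for some l \<ge> j; if a j held no primary, the l - j + 1 primaries of j, ..., l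
  would lie in the l - j positions a j + 1, ..., d l. Hence every position of A is primary and
  every secondary visit lies in a gap.\<close>

lemma schedule_positions_cover:
  assumes "is_schedule n prim sec"
  shows "prim ` {1..n} \<union> sec ` {1..n} = {1..2*n}"
proof -
  have "card (prim ` {1..n}) = n" "card (sec ` {1..n}) = n"
    using assms unfolding is_schedule_def by (auto simp: card_image)
  moreover have "prim ` {1..n} \<inter> sec ` {1..n} = {}"
    using assms unfolding is_schedule_def by auto
  ultimately have "card (prim ` {1..n} \<union> sec ` {1..n}) = 2*n"
    by (simp add: card_Un_disjoint)
  then show ?thesis
    using assms unfolding is_schedule_def by (intro card_subset_eq) auto
qed

lemma is_schedule_permute_positions:
  assumes "is_schedule n prim sec"
    and "inj_on \<sigma> {1..2*n}" "\<sigma> ` {1..2*n} \<subseteq> {1..2*n}"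
  shows "is_schedule n (\<sigma> \<circ> prim) (\<sigma> \<circ> sec)"
proof -
  have "prim ` {1..n} \<subseteq> {1..2*n}" "sec ` {1..n} \<subseteq> {1..2*n}"
    using assms(1) unfolding is_schedule_def by auto
  with assms show ?thesis
    unfolding is_schedule_def
    by (auto simp: comp_inj_on inj_on_subset image_subset_iff inj_on_eq_iff)
qed

lemma transpose_primary_secondary:
  assumes "is_schedule n prim sec" "v \<in> {1..n}" "w \<in> {1..n}" "i \<in> {1..n}"
  shows "transpose (prim v) (sec w) (prim i) = (prim(v := sec w)) i"
    and "transpose (prim v) (sec w) (sec i) = (sec(w := prim v)) i"
proof -
  have "prim i \<noteq> sec w" "sec i \<noteq> prim v"
    using assms unfolding is_schedule_def by metis+
  moreover have "prim i = prim v \<longleftrightarrow> i = v" "sec i = sec w \<longleftrightarrow> i = w"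
    using assms unfolding is_schedule_def by (meson inj_on_eq_iff)+
  ultimately show "transpose (prim v) (sec w) (prim i) = (prim(v := sec w)) i"
    and "transpose (prim v) (sec w) (sec i) = (sec(w := prim v)) i"
    by (auto simp: transpose_def)
qed

lemma feasible_schedule_exchange:
  assumes feas: "feasible_schedule n d prim sec"
    and v: "v \<in> {1..n}" and w: "w \<in> {1..n}"
    and later: "prim v < sec w" and deadline: "sec w \<le> d v"
  defines "\<sigma> \<equiv> transpose (prim v) (sec w)"
  shows "feasible_schedule n d (\<sigma> \<circ> prim) (\<sigma> \<circ> sec)"
proof -
  have sch: "is_schedule n prim sec"
    using feas unfolding feasible_schedule_def by simp
  have "prim v \<in> {1..2*n}" "sec w \<in> {1..2*n}"
    using sch v w unfolding is_schedule_def by auto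
  then have "is_schedule n (\<sigma> \<circ> prim) (\<sigma> \<circ> sec)"
    unfolding \<sigma>_def by (intro is_schedule_permute_positions[OF sch]) auto
  moreover have "(\<sigma> \<circ> prim) i \<le> d i \<and>
      ((\<sigma> \<circ> sec) i < (\<sigma> \<circ> prim) i \<or>
       ((\<sigma> \<circ> prim) i < (\<sigma> \<circ> sec) i \<and> (\<sigma> \<circ> sec) i \<le> (\<sigma> \<circ> prim) i + d i))"
    if i: "i \<in> {1..n}" for i
  proof -
    have old: "\<forall>k\<in>{1..n}. prim k \<le> d k \<and>
        (sec k < prim k \<or> (prim k < sec k \<and> sec k \<le> prim k + d k))"
      using feas unfolding feasible_schedule_def by simp
    have "prim i \<noteq> prim v" if "i \<noteq> v"
      using sch that i v unfolding is_schedule_def by (auto simp: inj_on_eq_iff)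
    moreover have "sec i \<noteq> sec w" if "i \<noteq> w"
      using sch that i w unfolding is_schedule_def by (auto simp: inj_on_eq_iff)
    ultimately show ?thesis
      using old v w i later deadline
      unfolding \<sigma>_def comp_def transpose_primary_secondary[OF sch v w i]
      by (cases "i = v"; cases "i = w") force+
  qed
  ultimately show ?thesis
    unfolding feasible_schedule_def by blast
qed

lemma exists_max_primary_sum_schedule:
  assumes "feasible_schedule n d prim0 sec0"
  obtains prim sec where "feasible_schedule n d prim sec"
    and "\<And>p s. feasible_schedule n d p s \<Longrightarrow> sum p {1..n} \<le> sum prim {1..n}"
proof -
  have "sum p {1..n} < 2*n*n + 1" if "feasible_schedule n d p s" for p s
  proof -
    have "sum p {1..n} \<le> sum (\<lambda>_. 2*n) {1..n}"
      using that unfolding feasible_schedule_def is_schedule_def by (intro sum_mono) auto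
    then show ?thesis by simp
  qed
  then have "\<exists>z. (\<lambda>(p, s). feasible_schedule n d p s) z \<and>
      (\<forall>y. (\<lambda>(p, s). feasible_schedule n d p s) y \<longrightarrow>
        (\<lambda>(p, s). sum p {1..n}) y \<le> (\<lambda>(p, s). sum p {1..n}) z)"
    using assms by (intro ex_has_greatest_nat[where k = "(prim0, sec0)"]) auto
  then show ?thesis
    using that by fastforce
qed

definition primaries_saturated :: "nat \<Rightarrow> (nat \<Rightarrow> nat) \<Rightarrow> (nat \<Rightarrow> nat) \<Rightarrow> bool" where
  "primaries_saturated n d prim \<longleftrightarrow> (\<forall>v\<in>{1..n}. {prim v<..d v} \<subseteq> prim ` {1..n})"

lemma exists_saturated_feasible_schedule:
  assumes feas: "feasible_schedule n d prim0 sec0"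
    and bound: "\<forall>i\<in>{1..n}. d i \<le> 2*n"
  obtains prim sec where "feasible_schedule n d prim sec" "primaries_saturated n d prim"
proof -
  obtain prim sec where fs: "feasible_schedule n d prim sec"
    and max: "\<And>p s. feasible_schedule n d p s \<Longrightarrow> sum p {1..n} \<le> sum prim {1..n}"
    using exists_max_primary_sum_schedule[OF feas] by blast
  have sch: "is_schedule n prim sec"
    using fs unfolding feasible_schedule_def by simp
  have "x \<in> prim ` {1..n}" if v: "v \<in> {1..n}" and x: "prim v < x" "x \<le> d v" for v x
  proof (rule ccontr)
    assume not_prim: "x \<notin> prim ` {1..n}"
    have "x \<in> {1..2*n}"
      using x bound v by fastforce
    then obtain w where w: "w \<in> {1..n}" "sec w = x"
      using not_prim schedule_positions_cover[OF sch] by blast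
    let ?\<sigma> = "transpose (prim v) (sec w)"
    have "sum prim {1..n} < sum (prim(v := x)) {1..n}"
      using v x by (intro sum_strict_mono_ex1) auto
    also have "\<dots> = sum (?\<sigma> \<circ> prim) {1..n}"
      using transpose_primary_secondary(1)[OF sch v w(1)] w by (intro sum.cong) auto
    also have "\<dots> \<le> sum prim {1..n}"
      by (rule max, rule feasible_schedule_exchange[OF fs v w(1)]) (use w x in auto)
    finally show False by simp
  qed
  then have "primaries_saturated n d prim"
    unfolding primaries_saturated_def by auto
  with fs show ?thesis
    by (rule that)
qed

lemma disc_le_deadline: "j \<in> {1..n} \<Longrightarrow> disc n d j \<le> d j"
  by (subst disc.simps) auto

lemma disc_reaches_deadline:
  assumes apos: "\<forall>i\<in>{1..n}. 0 < disc n d i" and j: "j \<in> {1..n}"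
  shows "\<exists>l\<in>{j..n}. disc n d j + (l - j) = d l"
  using j
proof (induction "n - j" arbitrary: j)
  case 0
  then show ?case by (subst disc.simps) auto
next
  case (Suc k)
  then have jn: "j < n" by auto
  have eq: "disc n d j = min (disc n d (Suc j) - 1) (d j)"
    using jn by (subst disc.simps) auto
  show ?case
  proof (cases "d j \<le> disc n d (Suc j) - 1")
    case True
    then show ?thesis using eq jn by force
  next
    case False
    have "k = n - Suc j" "Suc j \<in> {1..n}"
      using Suc.hyps(2) jn by auto
    then obtain l where l: "l \<in> {Suc j..n}" "disc n d (Suc j) + (l - Suc j) = d l"
      using Suc.hyps(1) by blast
    have "0 < disc n d j" using apos Suc.prems by blast
    then show ?thesis using eq False l by (intro bexI[of _ l]) auto
  qed
qed

lemma disc_in_saturated_primaries: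
  assumes inst: "valid_instance n d"
    and apos: "\<forall>i\<in>{1..n}. 0 < disc n d i"
    and inj: "inj_on prim {1..n}"
    and deadlines: "\<forall>i\<in>{1..n}. prim i \<le> d i"
    and sat: "primaries_saturated n d prim"
    and j: "j \<in> {1..n}"
  shows "disc n d j \<in> prim ` {1..n}"
proof (rule ccontr)
  assume not_prim: "disc n d j \<notin> prim ` {1..n}"
  obtain l where l: "l \<in> {j..n}" "disc n d j + (l - j) = d l"
    using disc_reaches_deadline[OF apos j] by blast
  have l1: "l \<in> {1..n}"
    using j l by simp
  have mono: "d i \<le> d k" if "i \<in> {1..n}" "k \<in> {1..n}" "i \<le> k" for i k
    using inst that unfolding valid_instance_def by blast
  have "prim v \<in> {disc n d j<..d l}" if v: "v \<in> {j..l}" for v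
  proof -
    have v1: "v \<in> {1..n}"
      using v j l by simp
    have "disc n d j \<le> d v"
      using disc_le_deadline[OF j, of d] mono[OF j v1] v by simp
    moreover have "disc n d j \<notin> {prim v<..d v}"
      using sat v1 not_prim unfolding primaries_saturated_def by blast
    moreover have "prim v \<noteq> disc n d j"
      using not_prim v1 by (metis imageI)
    moreover have "prim v \<le> d l"
      using deadlines mono[OF v1 l1] v1 v by (meson atLeastAtMost_iff le_trans)
    ultimately show ?thesis by auto
  qed
  then have "card (prim ` {j..l}) \<le> card {disc n d j<..d l}"
    by (intro card_mono) auto
  also have "\<dots> = l - j"
    using l(2) by simp
  also have "l - j < card (prim ` {j..l})"
    using inj_on_subset[OF inj, of "{j..l}"] j l by (simp add: card_image Suc_diff_le)
  finally show False by simp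
qed

theorem lemma5:
  fixes n :: nat and d :: "nat \<Rightarrow> nat"
  assumes inst: "valid_instance n d"
    and bound: "\<forall>i\<in>{1..n}. d i \<le> 2*n"
    and apos: "\<forall>i\<in>{1..n}. 0 < disc n d i"
    and feas: "\<exists>prim sec. feasible_schedule n d prim sec"
  shows "\<exists>prim sec. feasible_schedule n d prim sec \<and> (\<forall>i\<in>{1..n}. gap n d (sec i))"
proof -
  obtain prim0 sec0 where "feasible_schedule n d prim0 sec0"
    using feas by blast
  then obtain prim sec where fs: "feasible_schedule n d prim sec"
    and sat: "primaries_saturated n d prim"
    using exists_saturated_feasible_schedule bound by blast
  have sch: "is_schedule n prim sec"
    using fs unfolding feasible_schedule_def by simp
  have "inj_on prim {1..n}" "\<forall>i\<in>{1..n}. prim i \<le> d i"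
    using fs unfolding feasible_schedule_def is_schedule_def by simp_all
  then have disc_prim: "disc n d ` {1..n} \<subseteq> prim ` {1..n}"
    using disc_in_saturated_primaries[OF inst apos _ _ sat] by blast
  have "gap n d (sec i)" if i: "i \<in> {1..n}" for i
  proof -
    have "sec i \<in> {1..2*n}" "sec i \<notin> prim ` {1..n}"
      using sch i unfolding is_schedule_def by (simp, metis imageE)
    with disc_prim show ?thesis
      unfolding gap_def by blast
  qed
  with fs show ?thesis
    by blast
qed

end
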